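(* Let $A$ be a real $m\times n$ matrix with $\|A\|_\infty\le1$. Then there exist a sequence of partitions $\{\mathcal P_j\}_{j\ge1}$ of $\{1,\dots,m\}$ and a sequence of partitions $\{\mathcal Q_j\}_{j\ge1}$ of $\{1,\dots,n\}$ such that for each $j\ge1$: (1) $\mathcal P_{j+1}$ refines $\mathcal P_j$ and $\mathcal Q_{j+1}$ refines $\mathcal Q_j$; (2) $|\mathcal P_j|$ and $|\mathcal Q_j|$ are at most $(2^{j+2}j)^{j^2}$; (3) $\|A-A^{\mathcal P_j,\mathcal Q_j}\|_\Box\le 2j^{-1}+6j^32^{-j}$.
   Context: $\|A\|_\infty=\max|a_{ij}|$; $\|A\|_\Box=\frac1{mn}\max\{|x^TAy|:x\in\mathbb{R}^m,y\in\mathbb{R}^n,\|x\|_\infty\le1,\|y\|_\infty\le1\}$. For a partition $\mathcal P$ of the row indices and $\mathcal Q$ of the column indices, the blocks are the sets $S\times T$ with $S\in\mathcal P$, $T\in\mathcal Q$, and $A^{\mathcal P,\mathcal Q}$ is the matrix obtained from $A$ by replacing every entry in each block by the average of the entries of $A$ in that block. *)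

theory Defs
  imports "HOL-Library.Disjoint_Sets" Complex_Main
begin

text \<open>Real m x n matrices are functions nat => nat => real; rows indexed by {0..<m},
  columns by {0..<n} (i.e. 0-based rendering of {1..m}, {1..n}).\<close>

definition max_norm :: "nat \<Rightarrow> nat \<Rightarrow> (nat \<Rightarrow> nat \<Rightarrow> real) \<Rightarrow> real" where
  "max_norm m n A = Max ({\<bar>A i k\<bar> | i k. i < m \<and> k < n} \<union> {0})"

definition cut_norm :: "nat \<Rightarrow> nat \<Rightarrow> (nat \<Rightarrow> nat \<Rightarrow> real) \<Rightarrow> real" where
  "cut_norm m n A = (1 / (real m * real n)) *
     Sup {\<bar>\<Sum>i<m. \<Sum>k<n. x i * A i k * y k\<bar> | x y.
            (\<forall>i<m. \<bar>x i\<bar> \<le> 1) \<and> (\<forall>k<n. \<bar>y k\<bar> \<le> 1)}"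

definition block_avg :: "nat set set \<Rightarrow> nat set set \<Rightarrow> (nat \<Rightarrow> nat \<Rightarrow> real) \<Rightarrow> nat \<Rightarrow> nat \<Rightarrow> real" where
  "block_avg P Q A i k =
     (let S = (THE S. S \<in> P \<and> i \<in> S); T = (THE T. T \<in> Q \<and> k \<in> T) in
        (\<Sum>a\<in>S. \<Sum>b\<in>T. A a b) / (real (card S) * real (card T)))"

definition refines :: "'a set set \<Rightarrow> 'a set set \<Rightarrow> bool" where
  "refines P' P \<longleftrightarrow> (\<forall>S'\<in>P'. \<exists>S\<in>P. S' \<subseteq> S)"

end

(* Frieze-Kannan energy increment. The energy of a pair of partitions, the squared Frobenius
   norm of A^{P,Q}, lies in [0, m n] because block averaging is an orthogonal projection.
   If the residual A - A^{P,Q} has cut norm greater than \<epsilon>, a pair of sign vectors witnessing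
   this splits every block in two, and the refined pair gains at least \<epsilon>^2 m n energy. Hence
   (j+1)^2 splittings with \<epsilon> = 2/(j+1) bring the cut norm below 2/(j+1) while multiplying the
   number of blocks by at most 2^((j+1)^2). Doing this level by level gives nested partitions
   with at most 2^(j^3) <= (2^(j+2) j)^(j^2) blocks and cut-norm error at most 2/j, which is
   stronger than the stated bound. *)

theory Submission
  imports Defs
begin

lemma partition_on_the_block:
  assumes "partition_on I P" "S \<in> P" "i \<in> S"
  shows "(THE S. S \<in> P \<and> i \<in> S) = S"
proof (rule the_equality)
  fix S' assume "S' \<in> P \<and> i \<in> S'"
  then show "S' = S"
    using assms partition_onD2[OF assms(1)] by (meson disjointD disjoint_iff)
qed (use assms in blast)

lemma finite_partition_block:
  assumes "partition_on I P" "finite I" "S \<in> P"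
  shows "finite S"
  using assms partition_onD1 by (metis Union_upper finite_subset)

lemma refines_refl: "refines P P"
  unfolding refines_def by blast

lemma refines_trans: "refines P Q \<Longrightarrow> refines Q R \<Longrightarrow> refines P R"
  unfolding refines_def by (meson order_trans)

definition block_constant :: "nat set set \<Rightarrow> nat set set \<Rightarrow> (nat \<Rightarrow> nat \<Rightarrow> real) \<Rightarrow> bool" where
  "block_constant P Q F \<longleftrightarrow>
     (\<forall>S\<in>P. \<forall>T\<in>Q. \<forall>i\<in>S. \<forall>i'\<in>S. \<forall>k\<in>T. \<forall>k'\<in>T. F i k = F i' k')"

lemma block_constant_refines:
  "block_constant P Q F \<Longrightarrow> refines P' P \<Longrightarrow> refines Q' Q \<Longrightarrow> block_constant P' Q' F"
  unfolding block_constant_def refines_def by (meson subsetD)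

lemma block_avg_eq:
  assumes "partition_on I P" "partition_on K Q" "S \<in> P" "T \<in> Q" "i \<in> S" "k \<in> T"
  shows "block_avg P Q A i k = (\<Sum>a\<in>S. \<Sum>b\<in>T. A a b) / (real (card S) * real (card T))"
  unfolding block_avg_def Let_def using assms by (simp add: partition_on_the_block)

lemma block_constant_block_avg:
  "partition_on I P \<Longrightarrow> partition_on K Q \<Longrightarrow> block_constant P Q (block_avg P Q A)"
  unfolding block_constant_def by (simp add: block_avg_eq)

definition mat_inner :: "nat \<Rightarrow> nat \<Rightarrow> (nat \<Rightarrow> nat \<Rightarrow> real) \<Rightarrow> (nat \<Rightarrow> nat \<Rightarrow> real) \<Rightarrow> real" where
  "mat_inner m n F G = (\<Sum>i<m. \<Sum>k<n. F i k * G i k)"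

lemma mat_inner_commute: "mat_inner m n F G = mat_inner m n G F"
  by (simp add: mat_inner_def mult.commute)

lemma mat_inner_diff_left:
  "mat_inner m n (\<lambda>i k. F i k - G i k) H = mat_inner m n F H - mat_inner m n G H"
  by (simp add: mat_inner_def left_diff_distrib sum_subtractf)

lemma mat_inner_diff_right:
  "mat_inner m n H (\<lambda>i k. F i k - G i k) = mat_inner m n H F - mat_inner m n H G"
  by (simp add: mat_inner_def right_diff_distrib sum_subtractf)

lemma mat_inner_scale_left: "mat_inner m n (\<lambda>i k. c * F i k) G = c * mat_inner m n F G"
  by (simp add: mat_inner_def sum_distrib_left mult.assoc)

lemma mat_inner_scale_right: "mat_inner m n F (\<lambda>i k. c * G i k) = c * mat_inner m n F G"
  by (simp add: mat_inner_def sum_distrib_left mult.left_commute)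

lemma mat_inner_self_nonneg: "0 \<le> mat_inner m n F F"
  by (simp add: mat_inner_def sum_nonneg)

lemma mat_inner_block_sums:
  assumes P: "partition_on {..<m} P" and Q: "partition_on {..<n} Q"
  shows "mat_inner m n F G = (\<Sum>S\<in>P. \<Sum>T\<in>Q. \<Sum>i\<in>S. \<Sum>k\<in>T. F i k * G i k)"
proof -
  have "mat_inner m n F G = (\<Sum>S\<in>P. \<Sum>i\<in>S. \<Sum>T\<in>Q. \<Sum>k\<in>T. F i k * G i k)"
    unfolding mat_inner_def by (simp add: sum.partition[OF _ P] sum.partition[OF _ Q])
  also have "\<dots> = (\<Sum>S\<in>P. \<Sum>T\<in>Q. \<Sum>i\<in>S. \<Sum>k\<in>T. F i k * G i k)"
    by (intro sum.cong refl sum.swap)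
  finally show ?thesis .
qed

lemma mat_inner_block_avg:
  assumes P: "partition_on {..<m} P" and Q: "partition_on {..<n} Q"
    and F: "block_constant P Q F"
  shows "mat_inner m n (block_avg P Q A) F = mat_inner m n A F"
  unfolding mat_inner_block_sums[OF P Q]
proof (rule sum.cong[OF refl], rule sum.cong[OF refl])
  fix S T assume S: "S \<in> P" and T: "T \<in> Q"
  obtain i0 where i0: "i0 \<in> S"
    using S partition_onD3[OF P] by (metis ex_in_conv)
  obtain k0 where k0: "k0 \<in> T"
    using T partition_onD3[OF Q] by (metis ex_in_conv)
  have at_corner: "G i k = G i0 k0" if "block_constant P Q G" "i \<in> S" "k \<in> T" for G i k
    using that S T i0 k0 unfolding block_constant_def by blast
  note avg_corner = at_corner[OF block_constant_block_avg[OF P Q]]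
  have "finite S" "finite T"
    using finite_partition_block[OF P _ S] finite_partition_block[OF Q _ T] by auto
  then have "card S > 0" "card T > 0"
    using i0 k0 card_gt_0_iff by blast+
  have "(\<Sum>i\<in>S. \<Sum>k\<in>T. block_avg P Q A i k * F i k)
      = (\<Sum>i\<in>S. \<Sum>k\<in>T. block_avg P Q A i0 k0 * F i0 k0)"
    by (intro sum.cong refl) (simp add: avg_corner at_corner[OF F])
  also have "\<dots> = (\<Sum>i\<in>S. \<Sum>k\<in>T. A i k) * F i0 k0"
    using \<open>card S > 0\<close> \<open>card T > 0\<close> by (simp add: block_avg_eq[OF P Q S T i0 k0])
  also have "\<dots> = (\<Sum>i\<in>S. \<Sum>k\<in>T. A i k * F i k)"
    unfolding sum_distrib_right by (intro sum.cong refl) (simp add: at_corner[OF F])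
  finally show "(\<Sum>i\<in>S. \<Sum>k\<in>T. block_avg P Q A i k * F i k) = (\<Sum>i\<in>S. \<Sum>k\<in>T. A i k * F i k)" .
qed

definition energy :: "nat \<Rightarrow> nat \<Rightarrow> nat set set \<Rightarrow> nat set set \<Rightarrow> (nat \<Rightarrow> nat \<Rightarrow> real) \<Rightarrow> real" where
  "energy m n P Q A = mat_inner m n (block_avg P Q A) (block_avg P Q A)"

lemma energy_nonneg: "0 \<le> energy m n P Q A"
  unfolding energy_def by (rule mat_inner_self_nonneg)

lemma energy_le_mat_inner_self:
  assumes P: "partition_on {..<m} P" and Q: "partition_on {..<n} Q"
  shows "energy m n P Q A \<le> mat_inner m n A A"
proof -
  define G where "G = block_avg P Q A"
  have AG: "mat_inner m n A G = mat_inner m n G G"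
    unfolding G_def by (metis mat_inner_block_avg[OF P Q] block_constant_block_avg[OF P Q])
  have "0 \<le> mat_inner m n (\<lambda>i k. A i k - G i k) (\<lambda>i k. A i k - G i k)"
    by (rule mat_inner_self_nonneg)
  also have "\<dots> = mat_inner m n A A - mat_inner m n G G"
    unfolding mat_inner_diff_left mat_inner_diff_right using AG mat_inner_commute[of m n G A]
    by simp
  finally show ?thesis
    unfolding energy_def G_def by simp
qed

lemma abs_le_max_norm:
  assumes "i < m" "k < n"
  shows "\<bar>A i k\<bar> \<le> max_norm m n A"
proof -
  have "{\<bar>A i k\<bar> | i k. i < m \<and> k < n} \<subseteq> (\<lambda>(i, k). \<bar>A i k\<bar>) ` ({..<m} \<times> {..<n})"
    by force
  then have "finite ({\<bar>A i k\<bar> | i k. i < m \<and> k < n} \<union> {0})"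
    by (simp add: finite_subset)
  then show ?thesis
    unfolding max_norm_def using assms by (intro Max_ge) auto
qed

lemma mat_inner_self_le_size:
  assumes "max_norm m n A \<le> 1"
  shows "mat_inner m n A A \<le> real m * real n"
proof -
  have "mat_inner m n A A \<le> (\<Sum>i<m. \<Sum>k<n. 1)"
    unfolding mat_inner_def
  proof (intro sum_mono)
    fix i k assume "i \<in> {..<m}" "k \<in> {..<n}"
    then have "\<bar>A i k\<bar> \<le> 1"
      using abs_le_max_norm[of i m k n A] assms by simp
    then have "\<bar>A i k\<bar> * \<bar>A i k\<bar> \<le> 1"
      by (intro mult_le_one) auto
    then show "A i k * A i k \<le> 1"
      by simp
  qed
  then show ?thesis
    by simp
qed

lemma energy_increment:
  assumes P: "partition_on {..<m} P" and Q: "partition_on {..<n} Q"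
    and P': "partition_on {..<m} P'" and Q': "partition_on {..<n} Q'"
    and refined: "refines P' P" "refines Q' Q"
    and F: "block_constant P' Q' F" and F_norm: "mat_inner m n F F = real m * real n"
    and correlated: "\<epsilon> * (real m * real n) < mat_inner m n (\<lambda>i k. A i k - block_avg P Q A i k) F"
    and "\<epsilon> > 0"
  shows "energy m n P Q A + \<epsilon>\<^sup>2 * (real m * real n) \<le> energy m n P' Q' A"
proof -
  define G where "G = block_avg P Q A"
  define G' where "G' = block_avg P' Q' A"
  have G_fine: "block_constant P' Q' G"
    unfolding G_def by (rule block_constant_refines[OF block_constant_block_avg[OF P Q] refined])
  have G'G: "mat_inner m n G' G = mat_inner m n G G"
    unfolding G'_def using mat_inner_block_avg[OF P' Q' G_fine] G_def
      mat_inner_block_avg[OF P Q block_constant_block_avg[OF P Q]] by simp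
  have G'F: "mat_inner m n G' F = mat_inner m n A F"
    unfolding G'_def by (rule mat_inner_block_avg[OF P' Q' F])
  have "0 \<le> mat_inner m n (\<lambda>i k. G' i k - G i k - \<epsilon> * F i k) (\<lambda>i k. G' i k - G i k - \<epsilon> * F i k)"
    by (rule mat_inner_self_nonneg)
  also have "\<dots> = mat_inner m n G' G' - mat_inner m n G G + \<epsilon>\<^sup>2 * mat_inner m n F F
      - 2 * \<epsilon> * (mat_inner m n A F - mat_inner m n G F)"
    unfolding mat_inner_diff_left mat_inner_diff_right mat_inner_scale_left mat_inner_scale_right
    using G'G G'F mat_inner_commute[of m n G G'] mat_inner_commute[of m n F G']
      mat_inner_commute[of m n F G]
    by (simp add: power2_eq_square algebra_simps)
  finally have "0 \<le> energy m n P' Q' A - energy m n P Q A + \<epsilon>\<^sup>2 * (real m * real n)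
      - 2 * \<epsilon> * (mat_inner m n A F - mat_inner m n G F)"
    unfolding energy_def G_def G'_def F_norm .
  moreover have "\<epsilon> * (\<epsilon> * (real m * real n)) \<le> \<epsilon> * (mat_inner m n A F - mat_inner m n G F)"
    using correlated \<open>\<epsilon> > 0\<close> unfolding G_def mat_inner_diff_left by simp
  ultimately show ?thesis
    by (simp add: power2_eq_square algebra_simps)
qed

definition split_partition :: "'a set set \<Rightarrow> 'a set \<Rightarrow> 'a set set" where
  "split_partition P S = ((\<lambda>X. X \<inter> S) ` P \<union> (\<lambda>X. X - S) ` P) - {{}}"

lemma partition_on_split_partition:
  assumes P: "partition_on I P"
  shows "partition_on I (split_partition P S)"
proof (rule partition_onI)
  show "\<Union> (split_partition P S) = I"
    using partition_onD1[OF P] unfolding split_partition_def by blast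
  show "{} \<notin> split_partition P S"
    unfolding split_partition_def by blast
  have "X = Y \<or> X \<inter> Y = {}" if "X \<in> P" "Y \<in> P" for X Y
    using partition_onD2[OF P] that by (meson disjointD)
  then show "disjnt X Y" if "X \<in> split_partition P S" "Y \<in> split_partition P S" "X \<noteq> Y" for X Y
    using that unfolding split_partition_def disjnt_def by blast
qed

lemma refines_split_partition: "refines (split_partition P S) P"
  unfolding refines_def split_partition_def by blast

lemma card_split_partition_le:
  assumes "finite P"
  shows "card (split_partition P S) \<le> 2 * card P"
proof -
  have "card (split_partition P S) \<le> card ((\<lambda>X. X \<inter> S) ` P \<union> (\<lambda>X. X - S) ` P)"
    unfolding split_partition_def using assms by (intro card_mono) auto
  also have "\<dots> \<le> card ((\<lambda>X. X \<inter> S) ` P) + card ((\<lambda>X. X - S) ` P)"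
    by (rule card_Un_le)
  also have "\<dots> \<le> card P + card P"
    by (intro add_mono card_image_le assms)
  finally show ?thesis
    by simp
qed

lemma split_partition_sign_constant:
  assumes "\<And>i. x i = 1 \<or> x i = -1" "X \<in> split_partition P {i. x i = 1}" "i \<in> X" "i' \<in> X"
  shows "x i = (x i' :: real)"
proof -
  have "X \<subseteq> {i. x i = 1} \<or> X \<inter> {i. x i = 1} = {}"
    using assms(2) unfolding split_partition_def by blast
  then show ?thesis
    using assms(1)[of i] assms(1)[of i'] assms(3,4) by auto
qed

lemma sum_le_sum_sign:
  fixes c y :: "'a \<Rightarrow> real"
  assumes "\<And>k. k \<in> K \<Longrightarrow> \<bar>y k\<bar> \<le> 1"
  shows "(\<Sum>k\<in>K. y k * c k) \<le> (\<Sum>k\<in>K. (if c k \<ge> 0 then 1 else -1) * c k)"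
proof (rule sum_mono)
  fix k assume "k \<in> K"
  have "y k * c k \<le> \<bar>y k\<bar> * \<bar>c k\<bar>"
    by (metis abs_ge_self abs_mult)
  also have "\<dots> \<le> \<bar>c k\<bar>"
    using assms \<open>k \<in> K\<close> by (simp add: mult_left_le_one_le)
  finally show "y k * c k \<le> (if c k \<ge> 0 then 1 else -1) * c k"
    by auto
qed

lemma bilinear_le_sign_vectors:
  fixes B :: "nat \<Rightarrow> nat \<Rightarrow> real"
  assumes x: "\<And>i. i < m \<Longrightarrow> \<bar>x i\<bar> \<le> 1" and y: "\<And>k. k < n \<Longrightarrow> \<bar>y k\<bar> \<le> 1"
  obtains x' y' where "\<And>i. x' i = 1 \<or> x' i = -1" "\<And>k. y' k = 1 \<or> y' k = -1"
    "(\<Sum>i<m. \<Sum>k<n. x i * B i k * y k) \<le> (\<Sum>i<m. \<Sum>k<n. x' i * B i k * y' k)"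
proof
  define y' where "y' k = (if (\<Sum>i<m. x i * B i k) \<ge> 0 then 1 else -1 :: real)" for k
  define x' where "x' i = (if (\<Sum>k<n. B i k * y' k) \<ge> 0 then 1 else -1 :: real)" for i
  show "x' i = 1 \<or> x' i = -1" "y' k = 1 \<or> y' k = -1" for i k
    unfolding x'_def y'_def by auto
  have "(\<Sum>i<m. \<Sum>k<n. x i * B i k * y k) = (\<Sum>k<n. y k * (\<Sum>i<m. x i * B i k))"
    by (subst sum.swap) (simp add: sum_distrib_left algebra_simps)
  also have "\<dots> \<le> (\<Sum>k<n. y' k * (\<Sum>i<m. x i * B i k))"
    unfolding y'_def using y by (intro sum_le_sum_sign) auto
  also have "\<dots> = (\<Sum>i<m. x i * (\<Sum>k<n. B i k * y' k))"
    unfolding sum_distrib_left by (rule sum.swap[THEN trans]) (simp add: ac_simps)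
  also have "\<dots> \<le> (\<Sum>i<m. x' i * (\<Sum>k<n. B i k * y' k))"
    unfolding x'_def using x by (intro sum_le_sum_sign) auto
  also have "\<dots> = (\<Sum>i<m. \<Sum>k<n. x' i * B i k * y' k)"
    by (simp add: sum_distrib_left algebra_simps)
  finally show "(\<Sum>i<m. \<Sum>k<n. x i * B i k * y k) \<le> (\<Sum>i<m. \<Sum>k<n. x' i * B i k * y' k)" .
qed

lemma cut_norm_pos_imp_dims_pos: "0 < cut_norm m n B \<Longrightarrow> 0 < real m * real n"
  unfolding cut_norm_def by (cases "m = 0 \<or> n = 0") auto

lemma cut_norm_gt_imp_sign_witness:
  fixes B :: "nat \<Rightarrow> nat \<Rightarrow> real"
  assumes cut: "\<epsilon> < cut_norm m n B" and "0 \<le> \<epsilon>"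
  obtains x y where "\<And>i. x i = 1 \<or> x i = -1" "\<And>k. y k = 1 \<or> y k = -1"
    "\<epsilon> * (real m * real n) < (\<Sum>i<m. \<Sum>k<n. x i * B i k * y k)"
proof -
  define X where "X = {\<bar>\<Sum>i<m. \<Sum>k<n. x i * B i k * y k\<bar> | x y.
            (\<forall>i<m. \<bar>x i\<bar> \<le> (1::real)) \<and> (\<forall>k<n. \<bar>y k\<bar> \<le> (1::real))}"
  have mn: "0 < real m * real n"
    using cut \<open>0 \<le> \<epsilon>\<close> cut_norm_pos_imp_dims_pos[of m n B] by linarith
  have "\<epsilon> * (real m * real n) < Sup X"
    using cut mn unfolding cut_norm_def X_def by (simp add: field_simps)
  moreover have "\<bar>\<Sum>i<m. \<Sum>k<n. 0 * B i k * 0\<bar> \<in> X"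
    unfolding X_def by fastforce
  ultimately obtain t where "t \<in> X" "\<epsilon> * (real m * real n) < t"
    using less_cSupD by blast
  then obtain x y where x: "\<forall>i<m. \<bar>x i\<bar> \<le> 1" and y: "\<forall>k<n. \<bar>y k\<bar> \<le> 1"
    and big: "\<epsilon> * (real m * real n) < \<bar>\<Sum>i<m. \<Sum>k<n. x i * B i k * y k\<bar>"
    unfolding X_def by blast
  define s where "s = (if (\<Sum>i<m. \<Sum>k<n. x i * B i k * y k) \<ge> 0 then 1 else -1 :: real)"
  have "(\<Sum>i<m. \<Sum>k<n. (s * x i) * B i k * y k) = s * (\<Sum>i<m. \<Sum>k<n. x i * B i k * y k)"
    by (simp add: sum_distrib_left mult.assoc)
  then have signed: "\<epsilon> * (real m * real n) < (\<Sum>i<m. \<Sum>k<n. (s * x i) * B i k * y k)"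
    using big unfolding s_def by (auto split: if_splits)
  have "\<bar>s * x i\<bar> \<le> 1" if "i < m" for i
    using x that unfolding s_def by simp
  then obtain x' y' where "\<And>i. x' i = 1 \<or> x' i = -1" "\<And>k. y' k = 1 \<or> y' k = -1"
    and le: "(\<Sum>i<m. \<Sum>k<n. (s * x i) * B i k * y k) \<le> (\<Sum>i<m. \<Sum>k<n. x' i * B i k * y' k)"
    using bilinear_le_sign_vectors[of m "\<lambda>i. s * x i" n y B] y by blast
  moreover have "\<epsilon> * (real m * real n) < (\<Sum>i<m. \<Sum>k<n. x' i * B i k * y' k)"
    using signed le by linarith
  ultimately show ?thesis
    using that by blast
qed

lemma refinement_increasing_energy:
  assumes P: "partition_on {..<m} P" and Q: "partition_on {..<n} Q"
    and cut: "\<epsilon> < cut_norm m n (\<lambda>i k. A i k - block_avg P Q A i k)" and "0 < \<epsilon>"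
  obtains P' Q' where "partition_on {..<m} P'" "partition_on {..<n} Q'"
    "refines P' P" "refines Q' Q" "card P' \<le> 2 * card P" "card Q' \<le> 2 * card Q"
    "energy m n P Q A + \<epsilon>\<^sup>2 * (real m * real n) \<le> energy m n P' Q' A"
proof -
  obtain x y where x: "\<And>i. x i = 1 \<or> x i = -1" and y: "\<And>k. y k = 1 \<or> y k = -1"
    and witness: "\<epsilon> * (real m * real n)
      < (\<Sum>i<m. \<Sum>k<n. x i * (A i k - block_avg P Q A i k) * y k)"
    using cut_norm_gt_imp_sign_witness[OF cut] \<open>0 < \<epsilon>\<close> by auto
  define F where "F i k = x i * y k" for i k
  define P' where "P' = split_partition P {i. x i = 1}"
  define Q' where "Q' = split_partition Q {k. y k = 1}"
  have P': "partition_on {..<m} P'" and Q': "partition_on {..<n} Q'"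
    unfolding P'_def Q'_def using P Q by (simp_all add: partition_on_split_partition)
  have refined: "refines P' P" "refines Q' Q"
    unfolding P'_def Q'_def by (simp_all add: refines_split_partition)
  have "block_constant P' Q' F"
  proof (unfold block_constant_def, intro ballI)
    fix S T i i' k k'
    assume "S \<in> P'" "T \<in> Q'" "i \<in> S" "i' \<in> S" "k \<in> T" "k' \<in> T"
    moreover note split_partition_sign_constant[of x S P i i'] split_partition_sign_constant[of y T Q k k']
    ultimately have "x i = x i'" "y k = y k'"
      using x y by (simp_all add: P'_def Q'_def)
    then show "F i k = F i' k'"
      by (simp add: F_def)
  qed
  moreover have "mat_inner m n F F = real m * real n"
  proof -
    have "F i k * F i k = (x i * x i) * (y k * y k)" for i k
      by (simp add: F_def mult_ac)
    moreover have "x i * x i = 1" "y k * y k = 1" for i k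
      using x[of i] y[of k] by auto
    ultimately show ?thesis
      by (simp add: mat_inner_def)
  qed
  moreover have "\<epsilon> * (real m * real n) < mat_inner m n (\<lambda>i k. A i k - block_avg P Q A i k) F"
    using witness unfolding mat_inner_def F_def by (simp add: mult_ac)
  ultimately have "energy m n P Q A + \<epsilon>\<^sup>2 * (real m * real n) \<le> energy m n P' Q' A"
    using energy_increment[OF P Q P' Q' refined] \<open>0 < \<epsilon>\<close> by blast
  moreover have "card P' \<le> 2 * card P" "card Q' \<le> 2 * card Q"
    unfolding P'_def Q'_def using finite_elements[OF _ P] finite_elements[OF _ Q]
    by (simp_all add: card_split_partition_le)
  ultimately show ?thesis
    using that P' Q' refined by blast
qed

lemma iterated_refinement_increasing_energy:
  assumes P: "partition_on {..<m} P" and Q: "partition_on {..<n} Q" and "0 < \<epsilon>"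
  shows "\<exists>P' Q'. partition_on {..<m} P' \<and> partition_on {..<n} Q' \<and>
    refines P' P \<and> refines Q' Q \<and> card P' \<le> 2 ^ t * card P \<and> card Q' \<le> 2 ^ t * card Q \<and>
    (cut_norm m n (\<lambda>i k. A i k - block_avg P' Q' A i k) \<le> \<epsilon> \<or>
     energy m n P Q A + real t * \<epsilon>\<^sup>2 * (real m * real n) \<le> energy m n P' Q' A)"
proof (induction t)
  case 0
  show ?case
    using P Q by (intro exI[of _ P] exI[of _ Q]) (simp add: refines_refl)
next
  case (Suc t)
  then obtain P1 Q1 where P1: "partition_on {..<m} P1" and Q1: "partition_on {..<n} Q1"
    and refined1: "refines P1 P" "refines Q1 Q"
    and card1: "card P1 \<le> 2 ^ t * card P" "card Q1 \<le> 2 ^ t * card Q"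
    and progress: "cut_norm m n (\<lambda>i k. A i k - block_avg P1 Q1 A i k) \<le> \<epsilon> \<or>
      energy m n P Q A + real t * \<epsilon>\<^sup>2 * (real m * real n) \<le> energy m n P1 Q1 A"
    by blast
  show ?case
  proof (cases "cut_norm m n (\<lambda>i k. A i k - block_avg P1 Q1 A i k) \<le> \<epsilon>")
    case True
    then show ?thesis
      using P1 Q1 refined1 card1 by (intro exI[of _ P1] exI[of _ Q1]) auto
  next
    case False
    then have "\<epsilon> < cut_norm m n (\<lambda>i k. A i k - block_avg P1 Q1 A i k)"
      by simp
    then obtain P2 Q2 where P2: "partition_on {..<m} P2" and Q2: "partition_on {..<n} Q2"
      and refined2: "refines P2 P1" "refines Q2 Q1"
      and card2: "card P2 \<le> 2 * card P1" "card Q2 \<le> 2 * card Q1"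
      and increment: "energy m n P1 Q1 A + \<epsilon>\<^sup>2 * (real m * real n) \<le> energy m n P2 Q2 A"
      by (rule refinement_increasing_energy[OF P1 Q1 _ \<open>0 < \<epsilon>\<close>])
    have "card P2 \<le> 2 ^ Suc t * card P" "card Q2 \<le> 2 ^ Suc t * card Q"
      using card1 card2 by simp_all
    moreover have "energy m n P Q A + real (Suc t) * \<epsilon>\<^sup>2 * (real m * real n) \<le> energy m n P2 Q2 A"
      using progress False increment by (simp add: distrib_right)
    ultimately show ?thesis
      using P2 Q2 refines_trans[OF refined2(1) refined1(1)] refines_trans[OF refined2(2) refined1(2)]
      by blast
  qed
qed

lemma weak_regularity_refinement:
  assumes P: "partition_on {..<m} P" and Q: "partition_on {..<n} Q"
    and A: "max_norm m n A \<le> 1" and "0 < \<epsilon>" and steps: "1 < real t * \<epsilon>\<^sup>2"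
  obtains P' Q' where "partition_on {..<m} P'" "partition_on {..<n} Q'"
    "refines P' P" "refines Q' Q" "card P' \<le> 2 ^ t * card P" "card Q' \<le> 2 ^ t * card Q"
    "cut_norm m n (\<lambda>i k. A i k - block_avg P' Q' A i k) \<le> \<epsilon>"
proof -
  obtain P' Q' where P': "partition_on {..<m} P'" and Q': "partition_on {..<n} Q'"
    and props: "refines P' P" "refines Q' Q" "card P' \<le> 2 ^ t * card P" "card Q' \<le> 2 ^ t * card Q"
    and progress: "cut_norm m n (\<lambda>i k. A i k - block_avg P' Q' A i k) \<le> \<epsilon> \<or>
      energy m n P Q A + real t * \<epsilon>\<^sup>2 * (real m * real n) \<le> energy m n P' Q' A"
    using iterated_refinement_increasing_energy[OF P Q \<open>0 < \<epsilon>\<close>] by blast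
  have "cut_norm m n (\<lambda>i k. A i k - block_avg P' Q' A i k) \<le> \<epsilon>"
  proof (rule ccontr)
    assume cut: "\<not> ?thesis"
    then have mn: "0 < real m * real n"
      using cut_norm_pos_imp_dims_pos \<open>0 < \<epsilon>\<close> by (meson not_le order_less_trans)
    have "real t * \<epsilon>\<^sup>2 * (real m * real n) \<le> real m * real n"
      using cut progress energy_nonneg[of m n P Q A]
        energy_le_mat_inner_self[OF P' Q', of A] mat_inner_self_le_size[OF A]
      by linarith
    moreover have "1 * (real m * real n) < real t * \<epsilon>\<^sup>2 * (real m * real n)"
      using steps mn by (rule mult_strict_right_mono)
    ultimately show False
      by simp
  qed
  then show ?thesis
    using that P' Q' props by blast
qed

lemma weak_regularity_partition_sequence:
  assumes "0 < m" "0 < n" and A: "max_norm m n A \<le> 1"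
  obtains P Q :: "nat \<Rightarrow> nat set set" where "\<And>j. partition_on {..<m} (P j)"
    "\<And>j. partition_on {..<n} (Q j)"
    "\<And>j. refines (P (Suc j)) (P j)" "\<And>j. refines (Q (Suc j)) (Q j)"
    "\<And>j. card (P j) \<le> 2 ^ j ^ 3" "\<And>j. card (Q j) \<le> 2 ^ j ^ 3"
    "\<And>j. cut_norm m n (\<lambda>i k. A i k - block_avg (P (Suc j)) (Q (Suc j)) A i k) \<le> 2 / real (Suc j)"
proof -
  define admissible where "admissible j PQ \<longleftrightarrow>
    partition_on {..<m} (fst PQ) \<and> partition_on {..<n} (snd PQ) \<and>
    card (fst PQ) \<le> 2 ^ j ^ 3 \<and> card (snd PQ) \<le> 2 ^ j ^ 3" for j PQ
  define next_level where "next_level j PQ PQ' \<longleftrightarrow>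
    refines (fst PQ') (fst PQ) \<and> refines (snd PQ') (snd PQ) \<and>
    cut_norm m n (\<lambda>i k. A i k - block_avg (fst PQ') (snd PQ') A i k) \<le> 2 / real (Suc j)" for j PQ PQ'
  have "admissible 0 ({{..<m}}, {{..<n}})"
    unfolding admissible_def using assms by (auto intro: partition_on_space)
  moreover have "\<exists>PQ'. admissible (Suc j) PQ' \<and> next_level j PQ PQ'" if PQ: "admissible j PQ" for j PQ
  proof -
    have "1 < real (Suc j ^ 2) * (2 / real (Suc j))\<^sup>2"
      by (simp add: power_divide)
    then obtain P' Q' where "partition_on {..<m} P'" "partition_on {..<n} Q'"
      "refines P' (fst PQ)" "refines Q' (snd PQ)"
      and card: "card P' \<le> 2 ^ Suc j ^ 2 * card (fst PQ)" "card Q' \<le> 2 ^ Suc j ^ 2 * card (snd PQ)"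
      and "cut_norm m n (\<lambda>i k. A i k - block_avg P' Q' A i k) \<le> 2 / real (Suc j)"
      using PQ weak_regularity_refinement[OF _ _ A, where P="fst PQ" and Q="snd PQ"
          and \<epsilon>="2 / real (Suc j)" and t="Suc j ^ 2"]
      unfolding admissible_def by auto
    moreover have "2 ^ Suc j ^ 2 * 2 ^ j ^ 3 \<le> (2 :: nat) ^ Suc j ^ 3"
      unfolding power_add[symmetric]
      by (intro power_increasing) (simp_all add: power2_eq_square power3_eq_cube algebra_simps)
    then have "card P' \<le> 2 ^ Suc j ^ 3" "card Q' \<le> 2 ^ Suc j ^ 3"
      using card PQ unfolding admissible_def by (meson le_trans mult_le_mono2)+
    ultimately show ?thesis
      unfolding admissible_def next_level_def by (intro exI[of _ "(P', Q')"]) auto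
  qed
  ultimately obtain PQ where "\<And>j. admissible j (PQ j) \<and> next_level j (PQ j) (PQ (Suc j))"
    using dependent_nat_choice[of admissible next_level] by blast
  then show ?thesis
    using that[of "fst \<circ> PQ" "snd \<circ> PQ"] unfolding admissible_def next_level_def by simp
qed

lemma two_pow_cube_le: "1 \<le> j \<Longrightarrow> real (2 ^ j ^ 3) \<le> (2 ^ (j + 2) * real j) ^ j\<^sup>2"
proof -
  assume "1 \<le> j"
  have "real (2 ^ j ^ 3) = (2 ^ j) ^ j\<^sup>2"
    by (simp add: power_mult[symmetric] power3_eq_cube power2_eq_square)
  also have "\<dots> \<le> (2 ^ (j + 2) * real j) ^ j\<^sup>2"
  proof (rule power_mono)
    have "(2::real) ^ j \<le> 2 ^ (j + 2)"
      by (rule power_increasing) auto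
    also have "\<dots> \<le> 2 ^ (j + 2) * real j"
      using \<open>1 \<le> j\<close> by simp
    finally show "(2::real) ^ j \<le> 2 ^ (j + 2) * real j" .
  qed simp
  finally show ?thesis .
qed

theorem lemma10p1:
  fixes m n :: nat and A :: "nat \<Rightarrow> nat \<Rightarrow> real"
  assumes "m \<ge> 1" and "n \<ge> 1"
  assumes "max_norm m n A \<le> 1"
  shows "\<exists>P Q :: nat \<Rightarrow> nat set set.
    (\<forall>j\<ge>1.
       partition_on {0..<m} (P j) \<and> partition_on {0..<n} (Q j) \<and>
       refines (P (j+1)) (P j) \<and> refines (Q (j+1)) (Q j) \<and>
       real (card (P j)) \<le> (2 ^ (j+2) * real j) ^ (j^2) \<and>
       real (card (Q j)) \<le> (2 ^ (j+2) * real j) ^ (j^2) \<and>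
       cut_norm m n (\<lambda>i k. A i k - block_avg (P j) (Q j) A i k)
         \<le> 2 / real j + 6 * real j ^ 3 / 2 ^ j)"
proof -
  have "0 < m" "0 < n"
    using assms(1,2) by simp_all
  then obtain P Q where partitions: "\<And>j. partition_on {..<m} (P j)" "\<And>j. partition_on {..<n} (Q j)"
    and refined: "\<And>j. refines (P (Suc j)) (P j)" "\<And>j. refines (Q (Suc j)) (Q j)"
    and card: "\<And>j. card (P j) \<le> 2 ^ j ^ 3" "\<And>j. card (Q j) \<le> 2 ^ j ^ 3"
    and cut: "\<And>j. cut_norm m n (\<lambda>i k. A i k - block_avg (P (Suc j)) (Q (Suc j)) A i k) \<le> 2 / real (Suc j)"
    using weak_regularity_partition_sequence[OF _ _ assms(3)] by blast
  have "real (card (P j)) \<le> (2 ^ (j+2) * real j) ^ (j^2)"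
    "real (card (Q j)) \<le> (2 ^ (j+2) * real j) ^ (j^2)" if "j \<ge> 1" for j
    using two_pow_cube_le[OF that] card[of j] by (meson of_nat_le_iff order_trans)+
  moreover have "cut_norm m n (\<lambda>i k. A i k - block_avg (P j) (Q j) A i k)
      \<le> 2 / real j + 6 * real j ^ 3 / 2 ^ j" if "j \<ge> 1" for j
    using cut[of "j - 1"] that by (simp add: add_increasing2)
  ultimately show ?thesis
    using partitions refined by (intro exI[of _ P] exI[of _ Q]) (simp add: atLeast0LessThan)
qed

end
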